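(* Let $N>1$ and $d\ge1$. Consider molecules with atom features $s\in\mathbb{R}^{N\times d}$ and coordinates $\vec r\in\mathbb{R}^{N\times3}$, with node identity features $\tilde s_j=\mathrm{Concatenate}(s_j,j)\in\mathbb{R}^{d+1}$, and local environments $\mathrm{LE}_i=\{(\tilde s_j,\vec r_{ij}): j\in\{1,\dots,N\}\}$. There exists a function $g$ mapping such local environments to $\mathbb{R}^{3\times 3}$ which is $\mathrm{O}(3)$-equivariant, i.e. $g(\{(\tilde s_j,\vec r_{ij}o^T)\}_j)=g(\{(\tilde s_j,\vec r_{ij})\}_j)o^T$ for all $o\in\mathrm{O}(3)$, such that for every molecule and every $i$, the matrix $\vec E_i=g(\mathrm{LE}_i)$, with $k=\mathrm{rank}(\vec E_i)$, has its first $k$ rows forming an orthonormal basis of $\mathrm{span}\{\vec r_{ij}: j=1,\dots,N\}$ and its remaining $3-k$ rows equal to zero.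
   Context: $\vec r_i\in\mathbb{R}^{1\times 3}$ is row $i$ of $\vec r$, $\vec r_{ij}=\vec r_i-\vec r_j$, and $\mathrm{O}(3)=\{Q\in\mathbb{R}^{3\times3}:QQ^T=I\}$. $s_j$ is row $j$ of $s$, and the identity feature of atom $j$ is the number $j$. *)

theory Defs
  imports "HOL-Analysis.Analysis"
begin

text \<open>Node identity feature: Concatenate(s_j, j) is represented as the pair (s_j, j),
  an element of (real^'d) \<times> real (canonically isomorphic to R^(d+1)).\<close>

definition ident_feat :: "(nat \<Rightarrow> real^'d) \<Rightarrow> nat \<Rightarrow> (real^'d) \<times> real" where
  "ident_feat s j = (s j, real j)"

definition local_env :: "nat \<Rightarrow> (nat \<Rightarrow> real^'d) \<Rightarrow> (nat \<Rightarrow> real^3) \<Rightarrow> nat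
    \<Rightarrow> (((real^'d) \<times> real) \<times> (real^3)) set" where
  "local_env N s r i = {(ident_feat s j, r i - r j) | j. j \<in> {1..N}}"

text \<open>Right action of Q^T on a row vector v: v Q^T, which is Q *v v in column convention.\<close>
definition act_env :: "real^3^3 \<Rightarrow> (((real^'d) \<times> real) \<times> (real^3)) set
    \<Rightarrow> (((real^'d) \<times> real) \<times> (real^3)) set" where
  "act_env Q L = (\<lambda>(f, v). (f, Q *v v)) ` L"

text \<open>The m-th row (0-based: m = 0,1,2) of a 3x3 matrix.\<close>
definition row3 :: "nat \<Rightarrow> real^3^3 \<Rightarrow> real^3" where
  "row3 m E = (if m = 0 then E $ 1 else if m = 1 then E $ 2 else E $ 3)"

end

theory Submission
  imports Defs "HOL-Library.More_List"
begin

text \<open>The identity feature j lets one read off the ordered list of relative positions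
  r_i - r_1, ..., r_i - r_N from the (unordered) local environment, and an orthogonal
  transformation acts on it entrywise. Gram-Schmidt applied to this list commutes with
  orthogonal transformations, because it is built from inner products, norms and linear
  combinations only. Stacking the resulting orthonormal vectors as rows and padding with
  zero rows gives an equivariant frame whose rank is the number of nonzero rows and whose
  nonzero rows span the span of the relative positions.\<close>

definition orthonormal_list :: "'a::real_inner list \<Rightarrow> bool" where
  "orthonormal_list B \<longleftrightarrow>
     (\<forall>a<length B. \<forall>b<length B. B ! a \<bullet> B ! b = (if a = b then 1 else 0))"

definition orth_proj :: "'a::real_inner list \<Rightarrow> 'a \<Rightarrow> 'a" where
  "orth_proj B v = (\<Sum>a<length B. (v \<bullet> B ! a) *\<^sub>R B ! a)"

definition gram_schmidt_step :: "'a::real_inner list \<Rightarrow> 'a \<Rightarrow> 'a list" where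
  "gram_schmidt_step B v =
     (let w = v - orth_proj B v in if w = 0 then B else B @ [sgn w])"

definition gram_schmidt :: "'a::real_inner list \<Rightarrow> 'a list" where
  "gram_schmidt vs = foldl gram_schmidt_step [] vs"

lemma orth_proj_map:
  assumes "orthogonal_transformation f"
  shows "orth_proj (map f B) (f v) = f (orth_proj B v)"
proof -
  have "linear f" and "\<And>x y. f x \<bullet> f y = x \<bullet> y"
    using assms by (auto simp: orthogonal_transformation_def)
  then show ?thesis
    unfolding orth_proj_def by (simp add: linear_sum linear_scale)
qed

lemma gram_schmidt_step_map:
  assumes "orthogonal_transformation f"
  shows "gram_schmidt_step (map f B) (f v) = map f (gram_schmidt_step B v)"
proof -
  have lin: "linear f" and norm: "\<And>x. norm (f x) = norm x"
    using assms orthogonal_transformation_linear orthogonal_transformation_norm by auto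
  have "f x = 0 \<longleftrightarrow> x = 0" for x
    by (metis norm norm_eq_zero)
  moreover have "sgn (f x) = f (sgn x)" for x
    by (simp add: sgn_div_norm norm linear_scale[OF lin])
  ultimately show ?thesis
    unfolding gram_schmidt_step_def Let_def orth_proj_map[OF assms]
    by (simp add: linear_diff[OF lin, symmetric])
qed

lemma gram_schmidt_map:
  assumes "orthogonal_transformation f"
  shows "gram_schmidt (map f vs) = map f (gram_schmidt vs)"
proof -
  have "foldl gram_schmidt_step (map f B) (map f vs) = map f (foldl gram_schmidt_step B vs)" for B
    by (induction vs arbitrary: B) (simp_all add: gram_schmidt_step_map[OF assms])
  from this[of "[]"] show ?thesis
    by (simp add: gram_schmidt_def)
qed

lemma orth_proj_in_span: "orth_proj B v \<in> span (set B)"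
  unfolding orth_proj_def by (intro span_sum span_mul span_base) auto

lemma orthogonal_sub_orth_proj:
  assumes "orthonormal_list B" "c < length B"
  shows "(v - orth_proj B v) \<bullet> B ! c = 0"
proof -
  have "orth_proj B v \<bullet> B ! c = (\<Sum>a<length B. (v \<bullet> B ! a) * (B ! a \<bullet> B ! c))"
    unfolding orth_proj_def by (simp add: inner_sum_left)
  also have "\<dots> = (\<Sum>a<length B. if a = c then v \<bullet> B ! c else 0)"
    using assms unfolding orthonormal_list_def by (intro sum.cong) auto
  also have "\<dots> = v \<bullet> B ! c"
    using assms(2) by simp
  finally show ?thesis
    by (simp add: inner_diff_left)
qed

lemma orthonormal_list_snoc:
  assumes "orthonormal_list B" "u \<bullet> u = 1" "\<And>c. c < length B \<Longrightarrow> u \<bullet> B ! c = 0"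
  shows "orthonormal_list (B @ [u])"
  unfolding orthonormal_list_def
proof (intro allI impI)
  fix a b assume "a < length (B @ [u])" "b < length (B @ [u])"
  then show "(B @ [u]) ! a \<bullet> (B @ [u]) ! b = (if a = b then 1 else 0)"
    using assms unfolding orthonormal_list_def
    by (cases "a < length B"; cases "b < length B")
       (auto simp: nth_append inner_commute)
qed

lemma orthonormal_list_gram_schmidt_step:
  assumes "orthonormal_list B"
  shows "orthonormal_list (gram_schmidt_step B v)"
proof (cases "v - orth_proj B v = 0")
  case True
  then show ?thesis
    using assms by (simp add: gram_schmidt_step_def)
next
  case False
  have "sgn w \<bullet> sgn w = 1" if "w \<noteq> 0" for w :: 'a
    using that by (metis norm_eq_sqrt_inner norm_sgn real_sqrt_eq_1_iff)
  moreover have "sgn (v - orth_proj B v) \<bullet> B ! c = 0" if "c < length B" for c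
    using orthogonal_sub_orth_proj[OF assms that] by (simp add: sgn_div_norm)
  ultimately show ?thesis
    using False assms
    by (simp add: gram_schmidt_step_def orthonormal_list_snoc)
qed

lemma span_gram_schmidt_step:
  "span (set (gram_schmidt_step B v)) = span (insert v (set B))"
proof (cases "v - orth_proj B v = 0")
  case True
  then have "v \<in> span (set B)"
    using orth_proj_in_span by (metis eq_iff_diff_eq_0)
  then show ?thesis
    using True by (simp add: gram_schmidt_step_def span_redundant)
next
  case False
  define u where "u = sgn (v - orth_proj B v)"
  have proj: "orth_proj B v \<in> span (insert x (set B))" for x
    by (meson orth_proj_in_span span_mono subset_insertI subsetD)
  have "u \<in> span (insert v (set B))"
    unfolding u_def sgn_div_norm by (intro span_mul span_diff proj span_base) auto
  moreover have "v = norm (v - orth_proj B v) *\<^sub>R u + orth_proj B v"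
    unfolding u_def using False by (simp add: sgn_div_norm)
  then have "v \<in> span (insert u (set B))"
    by (metis proj span_add span_mul span_base insertI1)
  ultimately show ?thesis
    using False unfolding gram_schmidt_step_def Let_def u_def [symmetric]
    by (simp add: span_eq) (meson span_superset subset_insertI subset_trans insert_subset)
qed

lemma orthonormal_span_gram_schmidt:
  "orthonormal_list (gram_schmidt vs) \<and> span (set (gram_schmidt vs)) = span (set vs)"
proof -
  have "orthonormal_list (foldl gram_schmidt_step B vs) \<and>
        span (set (foldl gram_schmidt_step B vs)) = span (set B \<union> set vs)"
    if "orthonormal_list B" for B
    using that
  proof (induction vs arbitrary: B)
    case (Cons v vs)
    have "span (set (gram_schmidt_step B v) \<union> set vs) = span (insert v (set B) \<union> set vs)"
      by (simp only: span_Un span_gram_schmidt_step)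
    then show ?case
      using Cons.IH[OF orthonormal_list_gram_schmidt_step[OF Cons.prems]] by simp
  qed simp
  then show ?thesis
    by (simp add: gram_schmidt_def orthonormal_list_def)
qed

lemma orthonormal_list_independent:
  assumes "orthonormal_list B"
  shows "distinct B" "independent (set B)"
proof -
  show "distinct B"
    using assms unfolding distinct_conv_nth orthonormal_list_def by (metis zero_neq_one)
  have "pairwise orthogonal (set B)"
    using assms unfolding pairwise_def orthogonal_def orthonormal_list_def
    by (metis in_set_conv_nth)
  moreover have "0 \<notin> set B"
    using assms unfolding orthonormal_list_def
    by (metis in_set_conv_nth inner_zero_left zero_neq_one)
  ultimately show "independent (set B)"
    by (rule pairwise_orthogonal_independent)
qed

lemma orthonormal_list_length_le:
  fixes B :: "'a::euclidean_space list"
  assumes "orthonormal_list B"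
  shows "length B \<le> DIM('a)"
  using orthonormal_list_independent[OF assms] independent_bound distinct_card by metis

definition matrix_of_rows :: "(real^'n) list \<Rightarrow> real^'n^3" where
  "matrix_of_rows B = vector [nth_default 0 B 0, nth_default 0 B 1, nth_default 0 B 2]"

lemma row3_matrix_of_rows:
  assumes "a < 3"
  shows "row3 a (matrix_of_rows B) = nth_default 0 B a"
proof -
  from assms have "a = 0 \<or> a = 1 \<or> a = 2"
    by linarith
  then show ?thesis
    by (auto simp: row3_def matrix_of_rows_def)
qed

lemma rows_matrix_of_rows:
  "rows (matrix_of_rows B) = {nth_default 0 B 0, nth_default 0 B 1, nth_default 0 B 2}"
proof -
  have "rows (matrix_of_rows B) = range (\<lambda>i. matrix_of_rows B $ i)"
    unfolding rows_def row_def by (auto simp: vec_lambda_eta)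
  also have "\<dots> = {matrix_of_rows B $ 1, matrix_of_rows B $ 2, matrix_of_rows B $ 3}"
    by auto (metis exhaust_3)
  finally show ?thesis
    unfolding matrix_of_rows_def by simp
qed

lemma matrix_of_rows_map:
  fixes Q :: "real^'n^'n"
  shows "matrix_of_rows (map (\<lambda>x. Q *v x) B) = matrix_of_rows B ** transpose Q"
proof -
  have "(Q *v x) $ k = (\<Sum>j\<in>UNIV. x $ j * transpose Q $ j $ k)" for x k
    by (simp add: matrix_vector_mult_def transpose_def mult.commute)
  then show ?thesis
    unfolding vec_eq_iff matrix_of_rows_def
    by (auto simp: nth_default_def matrix_matrix_mult_def forall_3)
qed

lemma rank_matrix_of_rows:
  assumes "orthonormal_list B" "length B \<le> 3"
  shows "rank (matrix_of_rows B) = length B"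
proof -
  have "set B \<subseteq> rows (matrix_of_rows B)"
  proof
    fix x assume "x \<in> set B"
    then obtain a where "a < length B" "x = B ! a"
      by (metis in_set_conv_nth)
    moreover from this assms(2) have "a = 0 \<or> a = 1 \<or> a = 2"
      by linarith
    ultimately show "x \<in> rows (matrix_of_rows B)"
      unfolding rows_matrix_of_rows nth_default_def by auto
  qed
  moreover have "rows (matrix_of_rows B) \<subseteq> insert 0 (set B)"
    unfolding rows_matrix_of_rows nth_default_def by auto
  ultimately have "span (rows (matrix_of_rows B)) = span (set B)"
    by (metis span_insert_0 span_mono subset_antisym)
  then have "rank (matrix_of_rows B) = dim (set B)"
    unfolding row_rank_def by (metis dim_span)
  then show ?thesis
    using orthonormal_list_independent[OF assms(1)] dim_eq_card_independent distinct_card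
    by metis
qed

text \<open>On a local environment the identity feature j occurs exactly once, so the choice
  is determined.\<close>
definition env_vector :: "(((real^'d) \<times> real) \<times> (real^3)) set \<Rightarrow> nat \<Rightarrow> real^3" where
  "env_vector L j = (SOME v. \<exists>f. (f, v) \<in> L \<and> snd f = real j)"

lemma env_vector_local_env:
  "j \<in> {1..N} \<Longrightarrow> env_vector (local_env N s r i) j = r i - r j"
  unfolding env_vector_def local_env_def ident_feat_def
  by (rule some_equality) auto

lemma env_vector_act_env:
  "j \<in> {1..N} \<Longrightarrow> env_vector (act_env Q (local_env N s r i)) j = Q *v (r i - r j)"
  unfolding env_vector_def local_env_def ident_feat_def act_env_def
  by (rule some_equality) force+

definition relative_positions :: "nat \<Rightarrow> (nat \<Rightarrow> real^3) \<Rightarrow> nat \<Rightarrow> (real^3) list" where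
  "relative_positions N r i = map (\<lambda>j. r i - r j) [1..<N+1]"

definition env_frame :: "nat \<Rightarrow> (((real^'d) \<times> real) \<times> (real^3)) set \<Rightarrow> real^3^3" where
  "env_frame N L = matrix_of_rows (gram_schmidt (map (env_vector L) [1..<N+1]))"

lemma env_frame_local_env:
  "env_frame N (local_env N s r i) = matrix_of_rows (gram_schmidt (relative_positions N r i))"
  unfolding env_frame_def relative_positions_def
  by (intro arg_cong[where f = "\<lambda>vs. matrix_of_rows (gram_schmidt vs)"] map_cong)
     (auto simp: env_vector_local_env)

lemma env_frame_act_env:
  assumes "orthogonal_matrix Q"
  shows "env_frame N (act_env Q (local_env N s r i)) = env_frame N (local_env N s r i) ** transpose Q"
proof -
  have orth: "orthogonal_transformation (\<lambda>x. Q *v x)"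
    using assms by (simp add: orthogonal_transformation_matrix)
  have "map (env_vector (act_env Q (local_env N s r i))) [1..<N+1]
        = map (\<lambda>x. Q *v x) (relative_positions N r i)"
    unfolding relative_positions_def map_map
    by (intro map_cong) (auto simp: env_vector_act_env)
  then show ?thesis
    unfolding env_frame_local_env
    by (simp add: env_frame_def gram_schmidt_map[OF orth] matrix_of_rows_map)
qed

lemma matrix_of_rows_gram_schmidt:
  fixes vs :: "(real^3) list"
  defines "E \<equiv> matrix_of_rows (gram_schmidt vs)"
  shows "(\<forall>a<rank E. \<forall>b<rank E. row3 a E \<bullet> row3 b E = (if a = b then 1 else 0)) \<and>
         span {row3 a E | a. a < rank E} = span (set vs) \<and>
         (\<forall>a. rank E \<le> a \<and> a < 3 \<longrightarrow> row3 a E = 0)"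
proof -
  define B where "B = gram_schmidt vs"
  have orth: "orthonormal_list B" and span: "span (set B) = span (set vs)"
    using orthonormal_span_gram_schmidt unfolding B_def by auto
  have len: "length B \<le> 3"
    using orthonormal_list_length_le[OF orth] by simp
  have rank: "rank E = length B"
    unfolding E_def B_def[symmetric] using rank_matrix_of_rows[OF orth len] .
  have rows: "a < 3 \<Longrightarrow> row3 a E = nth_default 0 B a" for a
    unfolding E_def B_def[symmetric] by (rule row3_matrix_of_rows)
  have "{row3 a E | a. a < length B} = set B"
    using len by (auto simp: rows nth_default_nth in_set_conv_nth)
      (metis rows nth_default_nth less_le_trans)
  then show ?thesis
    using orth span len unfolding rank
    by (auto simp: rows nth_default_def orthonormal_list_def)
qed

text \<open>The construction works for every N.\<close>
theorem proposition6:
  fixes N :: nat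
  assumes "N > 1"
  shows "\<exists>g :: (((real^'d) \<times> real) \<times> (real^3)) set \<Rightarrow> real^3^3.
     (\<forall>(s :: nat \<Rightarrow> real^'d) (r :: nat \<Rightarrow> real^3) i (Q :: real^3^3).
        i \<in> {1..N} \<longrightarrow> orthogonal_matrix Q \<longrightarrow>
        g (act_env Q (local_env N s r i)) = g (local_env N s r i) ** transpose Q) \<and>
     (\<forall>(s :: nat \<Rightarrow> real^'d) (r :: nat \<Rightarrow> real^3) i. i \<in> {1..N} \<longrightarrow>
        (let E = g (local_env N s r i); k = rank E in
           (\<forall>a<k. \<forall>b<k. row3 a E \<bullet> row3 b E = (if a = b then 1 else 0)) \<and>
           span {row3 a E | a. a < k} = span {r i - r j | j. j \<in> {1..N}} \<and>
           (\<forall>a. k \<le> a \<and> a < 3 \<longrightarrow> row3 a E = 0)))"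
proof (intro exI[of _ "env_frame N"] conjI allI impI)
  fix s :: "nat \<Rightarrow> real^'d" and r i and Q :: "real^3^3"
  assume "orthogonal_matrix Q"
  then show "env_frame N (act_env Q (local_env N s r i)) = env_frame N (local_env N s r i) ** transpose Q"
    by (rule env_frame_act_env)
next
  fix s :: "nat \<Rightarrow> real^'d" and r i
  have "set (relative_positions N r i) = {r i - r j | j. j \<in> {1..N}}"
    by (auto simp: relative_positions_def)
  then show "let E = env_frame N (local_env N s r i); k = rank E in
           (\<forall>a<k. \<forall>b<k. row3 a E \<bullet> row3 b E = (if a = b then 1 else 0)) \<and>
           span {row3 a E | a. a < k} = span {r i - r j | j. j \<in> {1..N}} \<and>
           (\<forall>a. k \<le> a \<and> a < 3 \<longrightarrow> row3 a E = 0)"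
    using matrix_of_rows_gram_schmidt[of "relative_positions N r i"]
    by (simp add: env_frame_local_env Let_def)
qed

end
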